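(* For $n\ge 0$, let $CP_n$ be the clawed path with respect to a path of length $n$. Then $M_2(CP_n)\simeq S^{2n+1}$.
   Context: A path of length $n$ has $n$ edges and $n+1$ vertices (for $n=0$ it is a single vertex). For a graph $G$ of maximum degree at most $3$, the clawed graph $CG$ is obtained by subdividing every edge of $G$ (replacing $\{u,v\}$ by a new vertex $w$ and edges $\{u,w\},\{w,v\}$) and then attaching new leaves to every original vertex so that every original vertex has degree exactly $3$; $CP_n$ is the clawed graph of the path of length $n$ (so $CP_0=K_{1,3}$). $M_2(G)$ is the simplicial complex whose vertices are the edges of $G$ and whose faces are the $2$-matchings of $G$ (edge sets in which every vertex has degree at most $2$). *)

theory Defs
  imports "HOL-Analysis.Analysis"
begin

text \<open>Simple graphs are given by a vertex set V and a set E of 2-element subsets of V.\<close>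

definition degree :: "'a set set \<Rightarrow> 'a \<Rightarrow> nat" where
  "degree E v = card {e \<in> E. v \<in> e}"

text \<open>Vertices of the clawed graph: original vertices, subdivision vertices (one per edge),
  and new leaves (Leaf v j is the j-th leaf attached to v).\<close>
datatype 'a cvert = Orig 'a | Sub "'a set" | Leaf 'a nat

definition clawed_edges :: "'a set \<Rightarrow> 'a set set \<Rightarrow> 'a cvert set set" where
  "clawed_edges V E =
     {{Orig u, Sub e} | u e. e \<in> E \<and> u \<in> e}
     \<union> {{Orig v, Leaf v j} | v j. v \<in> V \<and> j < 3 - degree E v}"

definition path_vertices :: "nat \<Rightarrow> nat set" where
  "path_vertices n = {0..n}"

definition path_edges :: "nat \<Rightarrow> nat set set" where
  "path_edges n = {{i, Suc i} | i. i < n}"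

definition CP_edges :: "nat \<Rightarrow> nat cvert set set" where
  "CP_edges n = clawed_edges (path_vertices n) (path_edges n)"

definition two_matching_complex :: "'v set set \<Rightarrow> 'v set set set" where
  "two_matching_complex E = {F. F \<subseteq> E \<and> (\<forall>v. card {e \<in> F. v \<in> e} \<le> 2)}"

text \<open>Geometric realization of an abstract (finite) simplicial complex K with vertex type 'b:
  points are barycentric-coordinate functions whose support is a face of K,
  topologized as a subspace of the product space of real-valued functions.\<close>
definition realization_set :: "'b set set \<Rightarrow> ('b \<Rightarrow> real) set" where
  "realization_set K = {f. (\<forall>x. 0 \<le> f x) \<and> {x. f x \<noteq> 0} \<in> K \<and> sum f {x. f x \<noteq> 0} = 1}"

definition geometric_realization :: "'b set set \<Rightarrow> ('b \<Rightarrow> real) topology" where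
  "geometric_realization K = subtopology (powertop_real UNIV) (realization_set K)"

end

theory Submission
  imports Defs
begin

text \<open>Every edge of \<open>CP_n\<close> contains exactly one original vertex, and every other vertex has
  degree at most two. So a set of edges is a 2-matching iff at every original vertex \<open>i\<close> it
  misses one of the three edges \<open>e(i,0), e(i,1), e(i,2)\<close> there: \<open>M_2(CP_n)\<close> is the join of
  \<open>n + 1\<close> boundaries of triangles. A homeomorphism onto \<open>S^(2n+1)\<close> sends \<open>f\<close> to the normalised
  vector of differences \<open>f(e(i,k)) - f(e(i,2))\<close>, \<open>k < 2\<close>, in \<open>R^(2n+2)\<close>; the inverse subtracts
  in each block the minimum of its two coordinates and \<open>0\<close>, then rescales to total weight one.
  Before normalisation the two maps are positively homogeneous and mutually inverse.\<close>

lemma topspace_nsphere: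
  "topspace (nsphere m) = {x. (\<Sum>i\<le>m. x i ^ 2) = 1 \<and> (\<forall>i>m. x i = 0)}"
  by (simp add: nsphere)

lemma continuous_map_subtopology_coordinate:
  "continuous_map (subtopology (powertop_real UNIV) A) euclideanreal (\<lambda>f. f e)"
  by (intro continuous_map_from_subtopology continuous_map_product_projection) simp

lemma min_min_diff_eq_neg:
  fixes a b c :: real
  assumes "0 \<le> a" "0 \<le> b" "0 \<le> c" "a = 0 \<or> b = 0 \<or> c = 0"
  shows "min (min (a - c) (b - c)) 0 = - c"
  using assms by (auto simp: min_def)

lemma less_3_cases: "k < (3::nat) \<Longrightarrow> k = 0 \<or> k = 1 \<or> k = 2"
  by auto

lemma card_Int_less_iff_not_subset:
  assumes "finite A"
  shows "card (F \<inter> A) < card A \<longleftrightarrow> \<not> A \<subseteq> F"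
proof
  show "\<not> A \<subseteq> F" if "card (F \<inter> A) < card A"
    using that by (auto simp: Int_absorb1)
  show "card (F \<inter> A) < card A" if "\<not> A \<subseteq> F"
    using that by (intro psubset_card_mono[OF assms]) auto
qed

locale triangle_boundary_join =
  fixes n :: nat and tri :: "nat \<Rightarrow> nat \<Rightarrow> 'v"
  assumes tri_inj: "\<And>i k i' k'. \<lbrakk>i \<le> n; k < 3; i' \<le> n; k' < 3; tri i k = tri i' k'\<rbrakk>
    \<Longrightarrow> i = i' \<and> k = k'"
begin

definition verts :: "'v set" where
  "verts = (\<lambda>(i, k). tri i k) ` ({..n} \<times> {..<3})"

definition faces :: "'v set set" where
  "faces = {F. F \<subseteq> verts \<and> (\<forall>i\<le>n. \<exists>k<3. tri i k \<notin> F)}"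

definition tri_index :: "'v \<Rightarrow> nat \<times> nat" where
  "tri_index = inv_into ({..n} \<times> {..<3}) (\<lambda>(i, k). tri i k)"

lemma inj_on_tri: "inj_on (\<lambda>(i, k). tri i k) ({..n} \<times> {..<3})"
  using tri_inj by (auto simp: inj_on_def)

lemma finite_verts: "finite verts"
  by (simp add: verts_def)

lemma tri_in_verts: "i \<le> n \<Longrightarrow> k < 3 \<Longrightarrow> tri i k \<in> verts"
  by (auto simp: verts_def)

lemma tri_index_tri: "i \<le> n \<Longrightarrow> k < 3 \<Longrightarrow> tri_index (tri i k) = (i, k)"
  unfolding tri_index_def using inv_into_f_f[OF inj_on_tri, of "(i, k)"] by auto

lemma card_tri_block: "i \<le> n \<Longrightarrow> card (tri i ` {..<3}) = 3"
  by (subst card_image) (auto intro: inj_onI dest: tri_inj)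

lemma faces_iff_card_block_le:
  assumes "F \<subseteq> verts"
  shows "F \<in> faces \<longleftrightarrow> (\<forall>i\<le>n. card (F \<inter> tri i ` {..<3}) \<le> 2)"
proof -
  have "card (F \<inter> tri i ` {..<3}) \<le> 2 \<longleftrightarrow> (\<exists>k<3. tri i k \<notin> F)" if "i \<le> n" for i
    using card_Int_less_iff_not_subset[of "tri i ` {..<3}" F] card_tri_block[OF that] by auto
  then show ?thesis
    using assms by (auto simp: faces_def)
qed

lemma
  assumes "f \<in> realization_set faces"
  shows realization_nonneg: "0 \<le> f e"
    and realization_outside_verts: "e \<notin> verts \<Longrightarrow> f e = 0"
    and realization_vanishes_on_block: "i \<le> n \<Longrightarrow> \<exists>k<3. f (tri i k) = 0"
    and realization_sum_verts: "sum f verts = 1"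
proof -
  have supp: "{e. f e \<noteq> 0} \<subseteq> verts" and sum1: "sum f {e. f e \<noteq> 0} = 1"
    using assms by (auto simp: realization_set_def faces_def)
  show "0 \<le> f e" "e \<notin> verts \<Longrightarrow> f e = 0" "i \<le> n \<Longrightarrow> \<exists>k<3. f (tri i k) = 0"
    using assms by (auto simp: realization_set_def faces_def)
  have "sum f {e. f e \<noteq> 0} = sum f verts"
    by (rule sum.mono_neutral_left[OF finite_verts supp]) auto
  with sum1 show "sum f verts = 1" by simp
qed

definition edge_diff :: "('v \<Rightarrow> real) \<Rightarrow> nat \<Rightarrow> real" where
  "edge_diff f j =
    (if j < 2 * n + 2 then f (tri (j div 2) (j mod 2)) - f (tri (j div 2) 2) else 0)"

definition block_min :: "(nat \<Rightarrow> real) \<Rightarrow> nat \<Rightarrow> real" where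
  "block_min x i = min (min (x (2 * i)) (x (2 * i + 1))) 0"

definition lift_coord :: "(nat \<Rightarrow> real) \<Rightarrow> nat \<Rightarrow> nat \<Rightarrow> real" where
  "lift_coord x i k = (if k < 2 then x (2 * i + k) else 0) - block_min x i"

definition lift :: "(nat \<Rightarrow> real) \<Rightarrow> 'v \<Rightarrow> real" where
  "lift x e = (if e \<in> verts then case_prod (lift_coord x) (tri_index e) else 0)"

lemma edge_diff_block: "i \<le> n \<Longrightarrow> k < 2 \<Longrightarrow> edge_diff f (2 * i + k) = f (tri i k) - f (tri i 2)"
  by (simp add: edge_diff_def)

lemma lift_tri: "i \<le> n \<Longrightarrow> k < 3 \<Longrightarrow> lift x (tri i k) = lift_coord x i k"
  by (simp add: lift_def tri_in_verts tri_index_tri)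

lemma lift_coord_nonneg: "0 \<le> lift_coord x i k"
  using less_2_cases[of k] by (auto simp: lift_coord_def block_min_def)

lemma lift_coord_vanishes: "\<exists>k<3. lift_coord x i k = 0"
proof -
  have "lift_coord x i 0 = 0 \<or> lift_coord x i 1 = 0 \<or> lift_coord x i 2 = 0"
    by (simp add: lift_coord_def block_min_def min_def)
  then show ?thesis
    by force
qed

lemma lift_nonneg: "0 \<le> lift x e"
  by (auto simp: lift_def lift_coord_nonneg split: prod.split)

lemma edge_diff_scale: "edge_diff (\<lambda>e. c * f e) = (\<lambda>j. c * edge_diff f j)"
  by (auto simp: edge_diff_def right_diff_distrib)

lemma lift_scale: "0 \<le> c \<Longrightarrow> lift (\<lambda>j. c * x j) = (\<lambda>e. c * lift x e)"
  by (auto simp: lift_def lift_coord_def block_min_def min_mult_distrib_left right_diff_distrib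
      split: prod.split)

text \<open>A face misses a vertex of every block, so on every block \<open>f\<close> has minimum \<open>0\<close>;
  subtracting the block minimum from the differences therefore gives back \<open>f\<close>.\<close>

lemma lift_edge_diff:
  assumes f: "f \<in> realization_set faces"
  shows "lift (edge_diff f) = f"
proof
  fix e
  show "lift (edge_diff f) e = f e"
  proof (cases "e \<in> verts")
    case True
    then obtain i k where i: "i \<le> n" and k: "k < 3" and e: "e = tri i k"
      by (auto simp: verts_def)
    have "\<exists>k<3. f (tri i k) = 0"
      using realization_vanishes_on_block[OF f i] .
    then have "f (tri i 0) = 0 \<or> f (tri i 1) = 0 \<or> f (tri i 2) = 0"
      using less_3_cases by blast
    then have "block_min (edge_diff f) i = - f (tri i 2)"
      using min_min_diff_eq_neg realization_nonneg[OF f]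
        edge_diff_block[OF i, of 0 f] edge_diff_block[OF i, of 1 f]
      by (simp add: block_min_def)
    then show ?thesis
      using less_3_cases[OF k] edge_diff_block[OF i, of 0 f] edge_diff_block[OF i, of 1 f]
      by (auto simp: e lift_tri[OF i k] lift_coord_def)
  qed (simp add: lift_def realization_outside_verts[OF f])
qed

lemma edge_diff_lift:
  assumes "\<forall>j>2 * n + 1. x j = 0"
  shows "edge_diff (lift x) = x"
proof
  fix j
  show "edge_diff (lift x) j = x j"
  proof (cases "j < 2 * n + 2")
    case True
    then have "j div 2 \<le> n" "j mod 2 < 3" by auto
    then show ?thesis
      using True by (simp add: edge_diff_def lift_tri lift_coord_def)
  qed (use assms in \<open>simp add: edge_diff_def\<close>)
qed

lemma lift_zero: "lift (\<lambda>_. 0) = (\<lambda>_. 0)"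
  by (auto simp: lift_def lift_coord_def block_min_def split: prod.split)

lemma edge_diff_zero: "edge_diff (\<lambda>_. 0) = (\<lambda>_. 0)"
  by (auto simp: edge_diff_def)

definition coord_norm :: "(nat \<Rightarrow> real) \<Rightarrow> real" where
  "coord_norm x = sqrt (\<Sum>j\<le>2 * n + 1. x j ^ 2)"

lemma coord_norm_scale: "0 \<le> c \<Longrightarrow> coord_norm (\<lambda>j. c * x j) = c * coord_norm x"
  by (simp add: coord_norm_def power_mult_distrib sum_distrib_left[symmetric] real_sqrt_mult)

lemma coord_norm_nonneg: "0 \<le> coord_norm x"
  by (simp add: coord_norm_def sum_nonneg del: sum.atMost_Suc)

lemma coord_norm_eq_0: "coord_norm x = 0 \<Longrightarrow> j \<le> 2 * n + 1 \<Longrightarrow> x j = 0"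
  by (simp add: coord_norm_def sum_nonneg_eq_0_iff del: sum.atMost_Suc)

definition to_sphere :: "('v \<Rightarrow> real) \<Rightarrow> nat \<Rightarrow> real" where
  "to_sphere f = (\<lambda>j. edge_diff f j / coord_norm (edge_diff f))"

definition from_sphere :: "(nat \<Rightarrow> real) \<Rightarrow> 'v \<Rightarrow> real" where
  "from_sphere x = (\<lambda>e. lift x e / sum (lift x) verts)"

lemma coord_norm_edge_diff_pos:
  assumes f: "f \<in> realization_set faces"
  shows "0 < coord_norm (edge_diff f)"
proof (rule ccontr)
  assume "\<not> 0 < coord_norm (edge_diff f)"
  then have "coord_norm (edge_diff f) = 0"
    using coord_norm_nonneg[of "edge_diff f"] by linarith
  then have "edge_diff f = (\<lambda>_. 0)"
    using coord_norm_eq_0 by (force simp: edge_diff_def)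
  then have "f = (\<lambda>_. 0)"
    using lift_edge_diff[OF f] by (simp add: lift_zero)
  then show False
    using realization_sum_verts[OF f] by simp
qed

lemma sum_lift_pos:
  assumes x: "x \<in> topspace (nsphere (2 * n + 1))"
  shows "0 < sum (lift x) verts"
proof (rule ccontr)
  assume "\<not> 0 < sum (lift x) verts"
  moreover have "0 \<le> sum (lift x) verts"
    by (intro sum_nonneg lift_nonneg)
  ultimately have "\<forall>e\<in>verts. lift x e = 0"
    by (simp add: sum_nonneg_eq_0_iff[OF finite_verts] lift_nonneg)
  then have "lift x = (\<lambda>_. 0)"
    by (auto simp: lift_def)
  then have "x = (\<lambda>_. 0)"
    using edge_diff_lift[of x] x by (simp add: topspace_nsphere edge_diff_zero)
  then show False
    using x by (simp add: topspace_nsphere)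
qed

lemma to_sphere_in_nsphere:
  assumes f: "f \<in> realization_set faces"
  shows "to_sphere f \<in> topspace (nsphere (2 * n + 1))"
proof -
  define N where "N = coord_norm (edge_diff f)"
  have N: "0 < N"
    using coord_norm_edge_diff_pos[OF f] by (simp add: N_def)
  have "to_sphere f = (\<lambda>j. inverse N * edge_diff f j)"
    by (simp add: to_sphere_def N_def field_simps)
  then have "coord_norm (to_sphere f) = 1"
    using N by (simp add: coord_norm_scale N_def)
  then show ?thesis
    by (simp add: topspace_nsphere coord_norm_def to_sphere_def edge_diff_def)
qed

lemma from_sphere_in_realization:
  assumes x: "x \<in> topspace (nsphere (2 * n + 1))"
  shows "from_sphere x \<in> realization_set faces"
proof -
  have T: "0 < sum (lift x) verts"
    by (rule sum_lift_pos[OF x])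
  have supp: "{e. from_sphere x e \<noteq> 0} \<subseteq> verts"
    by (auto simp: from_sphere_def lift_def)
  have "\<exists>k<3. from_sphere x (tri i k) = 0" if "i \<le> n" for i
    using lift_coord_vanishes[of x i] that by (auto simp: from_sphere_def lift_tri)
  moreover have "sum (from_sphere x) {e. from_sphere x e \<noteq> 0} = 1"
  proof -
    have "sum (from_sphere x) {e. from_sphere x e \<noteq> 0} = sum (from_sphere x) verts"
      by (rule sum.mono_neutral_left[OF finite_verts supp]) auto
    also have "\<dots> = 1"
      using T by (simp add: from_sphere_def sum_divide_distrib[symmetric])
    finally show ?thesis .
  qed
  ultimately show ?thesis
    using supp T lift_nonneg by (auto simp: realization_set_def faces_def from_sphere_def)
qed

lemma from_sphere_to_sphere:
  assumes f: "f \<in> realization_set faces"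
  shows "from_sphere (to_sphere f) = f"
proof -
  define N where "N = coord_norm (edge_diff f)"
  have N: "0 < N"
    using coord_norm_edge_diff_pos[OF f] by (simp add: N_def)
  have "lift (to_sphere f) = (\<lambda>e. inverse N * f e)"
  proof -
    have "to_sphere f = (\<lambda>j. inverse N * edge_diff f j)"
      by (simp add: to_sphere_def N_def field_simps)
    then show ?thesis
      using N by (simp add: lift_scale lift_edge_diff[OF f])
  qed
  then show ?thesis
    using N by (simp add: from_sphere_def sum_distrib_left[symmetric] realization_sum_verts[OF f])
qed

lemma to_sphere_from_sphere:
  assumes x: "x \<in> topspace (nsphere (2 * n + 1))"
  shows "to_sphere (from_sphere x) = x"
proof -
  define T where "T = sum (lift x) verts"
  have T: "0 < T"
    using sum_lift_pos[OF x] by (simp add: T_def)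
  have "edge_diff (from_sphere x) = (\<lambda>j. inverse T * x j)"
  proof -
    have "from_sphere x = (\<lambda>e. inverse T * lift x e)"
      by (simp add: from_sphere_def T_def field_simps)
    then show ?thesis
      using x by (simp add: edge_diff_scale edge_diff_lift topspace_nsphere)
  qed
  moreover have "coord_norm x = 1"
    using x by (simp add: topspace_nsphere coord_norm_def)
  ultimately show ?thesis
    using T by (simp add: to_sphere_def coord_norm_scale)
qed

lemma continuous_map_edge_diff:
  "continuous_map (subtopology (powertop_real UNIV) A) euclideanreal (\<lambda>f. edge_diff f j)"
  by (simp add: edge_diff_def continuous_map_diff continuous_map_subtopology_coordinate)

lemma continuous_map_coord_norm_edge_diff:
  "continuous_map (subtopology (powertop_real UNIV) A) euclideanreal (\<lambda>f. coord_norm (edge_diff f))"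
  unfolding coord_norm_def
  by (intro continuous_map_sqrt continuous_map_sum continuous_map_real_pow continuous_map_edge_diff)
    auto

lemma continuous_map_lift:
  "continuous_map (subtopology (powertop_real UNIV) A) euclideanreal (\<lambda>x. lift x e)"
  by (simp add: lift_def lift_coord_def block_min_def case_prod_unfold continuous_map_diff
      continuous_map_real_min continuous_map_subtopology_coordinate)

lemma continuous_map_to_sphere:
  "continuous_map (geometric_realization faces) (nsphere (2 * n + 1)) to_sphere"
proof -
  have "continuous_map (geometric_realization faces) euclideanreal (\<lambda>f. to_sphere f j)" for j
    unfolding to_sphere_def geometric_realization_def
    by (intro continuous_map_real_divide continuous_map_edge_diff
        continuous_map_coord_norm_edge_diff) (auto dest: coord_norm_edge_diff_pos)
  then show ?thesis
    using to_sphere_in_nsphere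
    by (auto simp: nsphere continuous_map_in_subtopology continuous_map_componentwise_UNIV
        geometric_realization_def)
qed

lemma continuous_map_from_sphere:
  "continuous_map (nsphere (2 * n + 1)) (geometric_realization faces) from_sphere"
proof -
  have "continuous_map (nsphere (2 * n + 1)) euclideanreal (\<lambda>x. from_sphere x e)" for e
    unfolding from_sphere_def nsphere
    by (intro continuous_map_real_divide continuous_map_lift continuous_map_sum finite_verts)
      (use sum_lift_pos in \<open>force simp: nsphere\<close>)
  then show ?thesis
    using from_sphere_in_realization
    by (auto simp: continuous_map_in_subtopology continuous_map_componentwise_UNIV
        geometric_realization_def)
qed

lemma realization_homeomorphic_nsphere:
  "geometric_realization faces homeomorphic_space nsphere (2 * n + 1)"
  unfolding homeomorphic_space_def homeomorphic_maps_def
  by (intro exI[of _ to_sphere] exI[of _ from_sphere] conjI ballI continuous_map_to_sphere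
      continuous_map_from_sphere from_sphere_to_sphere to_sphere_from_sphere)
    (simp_all add: geometric_realization_def)

end

lemma clawed_edges_incident_Sub:
  "{e \<in> clawed_edges V E. Sub s \<in> e} \<subseteq> (if s \<in> E then (\<lambda>u. {Orig u, Sub s}) ` s else {})"
  by (auto simp: clawed_edges_def)

lemma clawed_edges_incident_Leaf:
  "{e \<in> clawed_edges V E. Leaf v j \<in> e} \<subseteq> {{Orig v, Leaf v j}}"
  by (auto simp: clawed_edges_def)

lemma two_matching_complex_clawed_edges:
  assumes "\<forall>s\<in>E. card s = 2"
  shows "two_matching_complex (clawed_edges V E) =
    {F. F \<subseteq> clawed_edges V E \<and> (\<forall>v. card {e \<in> F. Orig v \<in> e} \<le> 2)}"
proof (intro set_eqI iffI)
  fix F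
  assume "F \<in> {F. F \<subseteq> clawed_edges V E \<and> (\<forall>v. card {e \<in> F. Orig v \<in> e} \<le> 2)}"
  then have F: "F \<subseteq> clawed_edges V E" and Orig: "\<And>v. card {e \<in> F. Orig v \<in> e} \<le> 2"
    by auto
  have Sub: "card {e \<in> F. Sub s \<in> e} \<le> 2" for s
  proof -
    let ?B = "if s \<in> E then (\<lambda>u. {Orig u, Sub s}) ` s else {}"
    have "finite s" "card s = 2" if "s \<in> E"
      using assms that by (auto intro: card_ge_0_finite)
    then have "finite ?B" "card ?B \<le> 2"
      using card_image_le[of s "\<lambda>u. {Orig u, Sub s}"] by auto
    moreover have "{e \<in> F. Sub s \<in> e} \<subseteq> ?B"
      using F clawed_edges_incident_Sub[of V E s] by blast
    ultimately show ?thesis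
      by (meson card_mono le_trans)
  qed
  have Leaf: "card {e \<in> F. Leaf v j \<in> e} \<le> 2" for v j
  proof -
    have "card {e \<in> F. Leaf v j \<in> e} \<le> card {{Orig v, Leaf v j}}"
      using F clawed_edges_incident_Leaf[of V E v j] by (intro card_mono) auto
    then show ?thesis
      by simp
  qed
  have "card {e \<in> F. w \<in> e} \<le> 2" for w
    by (cases w) (use Orig Sub Leaf in auto)
  with F show "F \<in> two_matching_complex (clawed_edges V E)"
    by (simp add: two_matching_complex_def)
qed (simp add: two_matching_complex_def)

text \<open>The three edges at \<open>Orig i\<close>: \<open>k = 1\<close> leads towards \<open>i - 1\<close> and \<open>k = 2\<close> towards
  \<open>i + 1\<close>; a missing neighbour is replaced by the next unused leaf.\<close>

definition clawed_path_edge :: "nat \<Rightarrow> nat \<Rightarrow> nat \<Rightarrow> nat cvert set" where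
  "clawed_path_edge n i k =
    (if k = 0 then {Orig i, Leaf i 0}
     else if k = 1 then (if 0 < i then {Orig i, Sub {i - 1, i}} else {Orig i, Leaf i 1})
     else if i < n then {Orig i, Sub {i, Suc i}}
     else {Orig i, Leaf i (if 0 < i then 1 else 2)})"

lemma Orig_in_clawed_path_edge: "Orig j \<in> clawed_path_edge n i k \<longleftrightarrow> j = i"
  by (auto simp: clawed_path_edge_def)

lemma clawed_path_edge_inj:
  assumes "i \<le> n" "k < 3" "i' \<le> n" "k' < 3" "clawed_path_edge n i k = clawed_path_edge n i' k'"
  shows "i = i' \<and> k = k'"
proof -
  have "i = i'"
    using assms(5) Orig_in_clawed_path_edge by metis
  then show ?thesis
    using assms less_3_cases[of k] less_3_cases[of k']
    by (auto simp: clawed_path_edge_def doubleton_eq_iff split: if_splits)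
qed

interpretation clawed_path: triangle_boundary_join n "clawed_path_edge n"
  by unfold_locales (rule clawed_path_edge_inj)

lemma degree_path_edges:
  "degree (path_edges n) v = (if 0 < v \<and> v \<le> n then 1 else 0) + (if v < n then 1 else 0)"
proof -
  have "{e \<in> path_edges n. v \<in> e} =
      (if 0 < v \<and> v \<le> n then {{v - 1, v}} else {}) \<union> (if v < n then {{v, Suc v}} else {})"
    by (auto simp: path_edges_def)
  then show ?thesis
    by (auto simp: degree_def doubleton_eq_iff)
qed

lemma CP_edges_eq: "CP_edges n = clawed_path.verts n"
proof (intro equalityI subsetI)
  fix x
  assume "x \<in> CP_edges n"
  then consider
      (sub) i where "i < n" "x = {Orig i, Sub {i, Suc i}} \<or> x = {Orig (Suc i), Sub {i, Suc i}}"
    | (leaf) v j where "v \<le> n" "j < 3 - degree (path_edges n) v" "x = {Orig v, Leaf v j}"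
    by (auto simp: CP_edges_def clawed_edges_def path_edges_def path_vertices_def)
  then show "x \<in> clawed_path.verts n"
  proof cases
    case sub
    then have "x = clawed_path_edge n i 2 \<or> x = clawed_path_edge n (Suc i) 1"
      by (auto simp: clawed_path_edge_def)
    then show ?thesis
      using sub(1) clawed_path.tri_in_verts by auto
  next
    case leaf
    then have "x = clawed_path_edge n v 0 \<or> x = clawed_path_edge n 0 1 \<or> x = clawed_path_edge n v 2"
      using less_3_cases[of j] by (auto simp: clawed_path_edge_def degree_path_edges split: if_splits)
    then show ?thesis
      using leaf(1) clawed_path.tri_in_verts by auto
  qed
next
  fix x
  assume "x \<in> clawed_path.verts n"
  then obtain i k where i: "i \<le> n" and k: "k < 3" and x: "x = clawed_path_edge n i k"
    by (auto simp: clawed_path.verts_def)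
  have "{Orig u, Sub s} \<in> CP_edges n" if "s \<in> path_edges n" "u \<in> s" for u s
    using that by (auto simp: CP_edges_def clawed_edges_def)
  moreover have "{Orig v, Leaf v j} \<in> CP_edges n" if "v \<le> n" "j < 3 - degree (path_edges n) v" for v j
    using that by (auto simp: CP_edges_def clawed_edges_def path_vertices_def)
  moreover have "{i - 1, i} \<in> path_edges n" if "0 < i"
    using that i by (auto simp: path_edges_def intro: exI[of _ "i - 1"])
  moreover have "{i, Suc i} \<in> path_edges n" if "i < n"
    using that by (auto simp: path_edges_def)
  ultimately show "x \<in> CP_edges n"
    using i less_3_cases[OF k] by (auto simp: x clawed_path_edge_def degree_path_edges)
qed

lemma two_matching_complex_CP_edges: "two_matching_complex (CP_edges n) = clawed_path.faces n"
proof (intro set_eqI)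
  have M2: "two_matching_complex (CP_edges n) =
      {F. F \<subseteq> CP_edges n \<and> (\<forall>v. card {e \<in> F. Orig v \<in> e} \<le> 2)}"
    unfolding CP_edges_def by (rule two_matching_complex_clawed_edges) (auto simp: path_edges_def)
  fix F
  show "F \<in> two_matching_complex (CP_edges n) \<longleftrightarrow> F \<in> clawed_path.faces n"
  proof (cases "F \<subseteq> clawed_path.verts n")
    case True
    have "{e \<in> F. Orig v \<in> e} = (if v \<le> n then F \<inter> clawed_path_edge n v ` {..<3} else {})" for v
      using True by (auto simp: clawed_path.verts_def Orig_in_clawed_path_edge)
    then have "(\<forall>v. card {e \<in> F. Orig v \<in> e} \<le> 2) \<longleftrightarrow>
        (\<forall>v\<le>n. card (F \<inter> clawed_path_edge n v ` {..<3}) \<le> 2)"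
      by simp
    then show ?thesis
      using True M2 clawed_path.faces_iff_card_block_le[OF True] by (simp add: CP_edges_eq)
  next
    case False
    then show ?thesis
      using M2 by (auto simp: CP_edges_eq clawed_path.faces_def)
  qed
qed

theorem mainTheorem10:
  fixes n :: nat
  shows "geometric_realization (two_matching_complex (CP_edges n))
           homotopy_equivalent_space nsphere (2 * n + 1)"
  unfolding two_matching_complex_CP_edges
  by (rule homeomorphic_imp_homotopy_equivalent_space[OF clawed_path.realization_homeomorphic_nsphere])

end
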